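(* Let $\alpha \in [0,1)$. For every $k \in \{0,\dots,m-1\}$, with $\mathbf{S}_k = (S_k,\dots,S_k)$, $$B_{T_\ell}^*(\mathbf{S}_k) = S_{\min}\left(1 - \sqrt[n]{\alpha}\right) + S_k \sqrt[n]{\alpha}.$$
   Context: Fix integers $m \ge 2$, $n \ge 1$ and reals $S_{\min} < S_{\max}$; $S = \{S_0,\dots,S_{m-1}\}$ with $S_k = S_{\min} + k\frac{S_{\max}-S_{\min}}{m-1}$. $\mathcal{F}$ is the set of probability distributions on $S$, identified with the probability simplex in $\mathbb{R}^m$ with the Euclidean topology; $E[F]$ is the mean. $\Omega$ is the set of samples of size $n$ from $S$, identified with their sorted versions $x_{(1)} \le \dots \le x_{(n)}$. $P_F[\Omega']$ is the probability that the sorted sample of $n$ i.i.d. draws from $F$ lies in $\Omega' \subseteq \Omega$; $\mathcal{G}(\Omega',\alpha) = \{F : P_F[\Omega'] > \alpha\}$ and $\mathcal{F}(\Omega',\alpha)$ is its closure. The low lexicographic order $T_\ell$: $\mathbf{x} \le_{T_\ell} \mathbf{y}$ iff $\mathbf{x}=\mathbf{y}$ or at the smallest index $j$ with $x_{(j)} \ne y_{(j)}$ we have $x_{(j)} < y_{(j)}$. $\Omega(\mathbf{x},T_\ell) = \{\mathbf{y} : \mathbf{x} \le_{T_\ell} \mathbf{y}\}$ and $B_{T_\ell}^*(\mathbf{x}) = \min\{E[F] : F \in \mathcal{F}(\Omega(\mathbf{x},T_\ell),\alpha)\}$. *)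

theory Defs
  imports "HOL-Analysis.Analysis"
begin

definition Sgrid :: "nat \<Rightarrow> real \<Rightarrow> real \<Rightarrow> nat \<Rightarrow> real" where
  "Sgrid m Smin Smax k = Smin + real k * (Smax - Smin) / (real m - 1)"

text \<open>Probability prob_simplex in R^m, coordinates 0..m-1 (functions vanishing outside).
  Topology: product topology on nat => real, which restricted to this set is the
  Euclidean topology of R^m.\<close>
definition prob_simplex :: "nat \<Rightarrow> (nat \<Rightarrow> real) set" where
  "prob_simplex m = {F. (\<forall>i<m. 0 \<le> F i) \<and> (\<forall>i\<ge>m. F i = 0) \<and> (\<Sum>i<m. F i) = 1}"

definition mean :: "nat \<Rightarrow> real \<Rightarrow> real \<Rightarrow> (nat \<Rightarrow> real) \<Rightarrow> real" where
  "mean m Smin Smax F = (\<Sum>i<m. F i * Sgrid m Smin Smax i)"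

definition Samples :: "nat \<Rightarrow> nat \<Rightarrow> real \<Rightarrow> real \<Rightarrow> real list set" where
  "Samples m n Smin Smax = {y. length y = n \<and> sorted y \<and> set y \<subseteq> Sgrid m Smin Smax ` {..<m}}"

text \<open>P_F[Omega']: probability that the sorted sample of n iid draws from F lies in Omega'.\<close>
definition probF :: "nat \<Rightarrow> nat \<Rightarrow> real \<Rightarrow> real \<Rightarrow> (nat \<Rightarrow> real) \<Rightarrow> real list set \<Rightarrow> real" where
  "probF m n Smin Smax F \<Omega>' =
     (\<Sum>w \<in> {..<n} \<rightarrow>\<^sub>E {..<m}.
        (if sort (map (\<lambda>j. Sgrid m Smin Smax (w j)) [0..<n]) \<in> \<Omega>'
         then (\<Prod>j<n. F (w j)) else 0))"

definition Gset :: "nat \<Rightarrow> nat \<Rightarrow> real \<Rightarrow> real \<Rightarrow> real list set \<Rightarrow> real \<Rightarrow> (nat \<Rightarrow> real) set" where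
  "Gset m n Smin Smax \<Omega>' \<alpha> = {F \<in> prob_simplex m. probF m n Smin Smax F \<Omega>' > \<alpha>}"

definition Fset :: "nat \<Rightarrow> nat \<Rightarrow> real \<Rightarrow> real \<Rightarrow> real list set \<Rightarrow> real \<Rightarrow> (nat \<Rightarrow> real) set" where
  "Fset m n Smin Smax \<Omega>' \<alpha> = closure (Gset m n Smin Smax \<Omega>' \<alpha>)"

definition lowlex_le :: "nat \<Rightarrow> real list \<Rightarrow> real list \<Rightarrow> bool" where
  "lowlex_le n x y \<longleftrightarrow> x = y \<or>
     (\<exists>j<n. (\<forall>i<j. x ! i = y ! i) \<and> x ! j < y ! j)"

definition OmegaTl :: "nat \<Rightarrow> nat \<Rightarrow> real \<Rightarrow> real \<Rightarrow> real list \<Rightarrow> real list set" where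
  "OmegaTl m n Smin Smax x = {y \<in> Samples m n Smin Smax. lowlex_le n x y}"

text \<open>The set {E[F] : F in F(Omega(x,T_l), alpha)}; B*_{T_l}(x) is its minimum.\<close>
definition Bvals :: "nat \<Rightarrow> nat \<Rightarrow> real \<Rightarrow> real \<Rightarrow> real \<Rightarrow> real list \<Rightarrow> real set" where
  "Bvals m n Smin Smax \<alpha> x = mean m Smin Smax ` Fset m n Smin Smax (OmegaTl m n Smin Smax x) \<alpha>"

end

theory Submission
  imports Defs
begin

text \<open>For the constant sample \<open>(S\<^sub>k, \<dots>, S\<^sub>k)\<close>, a sorted sample is above it in the low
  lexicographic order exactly when every draw is at least \<open>S\<^sub>k\<close>. Hence \<open>P\<^sub>F\<close> of this event
  is \<open>q\<^sup>n\<close>, where \<open>q\<close> is the mass \<open>F\<close> puts on \<open>{S\<^sub>k, \<dots>, S\<^sub>m\<^sub>-\<^sub>1}\<close>, and the constraint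
  \<open>P\<^sub>F > \<alpha>\<close> becomes \<open>q > \<alpha>\<^bsup>1/n\<^esup>\<close>. Given \<open>q\<close>, the mean is smallest when the mass \<open>q\<close> sits
  on \<open>S\<^sub>k\<close> and the rest on \<open>S\<^sub>m\<^sub>i\<^sub>n\<close>, giving \<open>S\<^sub>m\<^sub>i\<^sub>n (1 - q) + S\<^sub>k q\<close>; this bound is closed
  under limits, and the two-point distributions with \<open>q \<down> \<alpha>\<^bsup>1/n\<^esup>\<close> attain it in the closure.\<close>

lemma Sgrid_0 [simp]: "Sgrid m Smin Smax 0 = Smin"
  by (simp add: Sgrid_def)

lemma Sgrid_le_iff:
  assumes "m \<ge> 2" "Smin < Smax"
  shows "Sgrid m Smin Smax i \<le> Sgrid m Smin Smax j \<longleftrightarrow> i \<le> j"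
proof -
  have "(Smax - Smin) / (real m - 1) > 0"
    using assms by simp
  then show ?thesis
    by (simp add: Sgrid_def mult_le_cancel_right flip: times_divide_eq_right)
qed

lemma Smin_le_Sgrid:
  assumes "m \<ge> 2" "Smin < Smax"
  shows "Smin \<le> Sgrid m Smin Smax i"
  using Sgrid_le_iff [OF assms, of 0 i] by simp

lemma prob_simplex_nonneg: "F \<in> prob_simplex m \<Longrightarrow> i < m \<Longrightarrow> 0 \<le> F i"
  by (simp add: prob_simplex_def)

lemma prob_simplex_sum: "F \<in> prob_simplex m \<Longrightarrow> (\<Sum>i<m. F i) = 1"
  by (simp add: prob_simplex_def)

lemma lowlex_le_replicate_iff:
  assumes "length y = n" and "sorted y"
  shows "lowlex_le n (replicate n c) y \<longleftrightarrow> (\<forall>z\<in>set y. c \<le> z)"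
proof
  assume "lowlex_le n (replicate n c) y"
  then consider "replicate n c = y"
    | j where "j < n" "\<forall>i<j. c = y ! i" "c < y ! j"
    unfolding lowlex_le_def by auto
  then show "\<forall>z\<in>set y. c \<le> z"
  proof cases
    case 1
    then show ?thesis by auto
  next
    case (2 j)
    then have "c \<le> y ! 0"
      by (cases "j = 0") auto
    moreover have "y ! 0 \<le> z" if "z \<in> set y" for z
      using that \<open>sorted y\<close> by (auto simp: in_set_conv_nth sorted_nth_mono)
    ultimately show ?thesis by force
  qed
next
  assume lower: "\<forall>z\<in>set y. c \<le> z"
  show "lowlex_le n (replicate n c) y"
  proof (cases "\<exists>p<n. y ! p \<noteq> c")
    case False
    then have "replicate n c = y"
      using \<open>length y = n\<close> by (intro nth_equalityI) auto
    then show ?thesis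
      unfolding lowlex_le_def by simp
  next
    case True
    define j where "j = (LEAST p. p < n \<and> y ! p \<noteq> c)"
    have j: "j < n" "y ! j \<noteq> c"
      using LeastI_ex [OF True] unfolding j_def by auto
    have "\<forall>i<j. c = y ! i"
      using not_less_Least j(1) unfolding j_def by fastforce
    moreover have "c < y ! j"
      using lower j \<open>length y = n\<close> by (metis nth_mem order_neq_le_trans)
    ultimately show ?thesis
      unfolding lowlex_le_def using j(1) by auto
  qed
qed

lemma probF_all_draws_in:
  assumes "A \<subseteq> {..<m}"
    and event: "\<And>w. w \<in> {..<n} \<rightarrow>\<^sub>E {..<m} \<Longrightarrow>
      sort (map (\<lambda>j. Sgrid m Smin Smax (w j)) [0..<n]) \<in> \<Omega>' \<longleftrightarrow> (\<forall>j<n. w j \<in> A)"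
  shows "probF m n Smin Smax F \<Omega>' = (\<Sum>i\<in>A. F i) ^ n"
proof -
  have "probF m n Smin Smax F \<Omega>' =
      (\<Sum>w\<in>{..<n} \<rightarrow>\<^sub>E {..<m}. if \<forall>j<n. w j \<in> A then \<Prod>j<n. F (w j) else 0)"
    unfolding probF_def by (intro sum.cong) (auto simp: event)
  also have "\<dots> = (\<Sum>w\<in>{w\<in>{..<n} \<rightarrow>\<^sub>E {..<m}. \<forall>j<n. w j \<in> A}. \<Prod>j<n. F (w j))"
    by (intro sum.inter_filter [symmetric] finite_PiE) auto
  also have "{w\<in>{..<n} \<rightarrow>\<^sub>E {..<m}. \<forall>j<n. w j \<in> A} = {..<n} \<rightarrow>\<^sub>E A"
    using assms(1) by (auto simp: PiE_def Pi_def)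
  also have "(\<Sum>w\<in>{..<n} \<rightarrow>\<^sub>E A. \<Prod>j<n. F (w j)) = (\<Prod>j<n. \<Sum>i\<in>A. F i)"
    using assms(1) by (intro prod_sum_PiE [symmetric]) (auto intro: finite_subset)
  finally show ?thesis by simp
qed

lemma probF_OmegaTl_replicate:
  assumes "m \<ge> 2" "Smin < Smax" "k < m"
  shows "probF m n Smin Smax F (OmegaTl m n Smin Smax (replicate n (Sgrid m Smin Smax k)))
       = (\<Sum>i=k..<m. F i) ^ n"
proof (rule probF_all_draws_in)
  fix w assume w: "w \<in> {..<n} \<rightarrow>\<^sub>E {..<m}"
  let ?y = "sort (map (\<lambda>j. Sgrid m Smin Smax (w j)) [0..<n])"
  have "set ?y = (\<lambda>j. Sgrid m Smin Smax (w j)) ` {..<n}"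
    by auto
  moreover from this have "?y \<in> Samples m n Smin Smax"
    using w unfolding Samples_def by auto
  ultimately show "?y \<in> OmegaTl m n Smin Smax (replicate n (Sgrid m Smin Smax k))
      \<longleftrightarrow> (\<forall>j<n. w j \<in> {k..<m})"
    using w Sgrid_le_iff [OF assms(1,2)]
    by (auto simp: OmegaTl_def lowlex_le_replicate_iff)
qed auto

lemma Gset_OmegaTl_replicate:
  assumes "m \<ge> 2" "Smin < Smax" "k < m"
  shows "Gset m n Smin Smax (OmegaTl m n Smin Smax (replicate n (Sgrid m Smin Smax k))) \<alpha>
       = {F \<in> prob_simplex m. \<alpha> < (\<Sum>i=k..<m. F i) ^ n}"
  unfolding Gset_def probF_OmegaTl_replicate [OF assms] ..

text \<open>Moving the mass below \<open>S\<^sub>k\<close> down to \<open>S\<^sub>m\<^sub>i\<^sub>n\<close> and the mass from \<open>S\<^sub>k\<close> on down to \<open>S\<^sub>k\<close>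
  only lowers the mean.\<close>

lemma mean_ge_tail_mass:
  assumes "m \<ge> 2" "Smin < Smax" "k < m" "F \<in> prob_simplex m"
    and "r \<le> (\<Sum>i=k..<m. F i)"
  shows "Smin * (1 - r) + Sgrid m Smin Smax k * r \<le> mean m Smin Smax F"
proof -
  let ?S = "Sgrid m Smin Smax" and ?q = "\<Sum>i=k..<m. F i"
  have split: "(\<Sum>i<m. f i) = (\<Sum>i<k. f i) + (\<Sum>i=k..<m. f i)" for f :: "nat \<Rightarrow> real"
    using assms(3) by (simp add: lessThan_atLeast0 sum.atLeastLessThan_concat)
  have "0 \<le> (?S k - Smin) * (?q - r)"
    using assms(5) Smin_le_Sgrid [OF assms(1,2), of k] by simp
  then have "Smin * (1 - r) + ?S k * r \<le> Smin * (1 - ?q) + ?S k * ?q"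
    by (simp add: algebra_simps)
  also have "1 - ?q = (\<Sum>i<k. F i)"
    using split [of F] prob_simplex_sum [OF assms(4)] by simp
  also have "Smin * (\<Sum>i<k. F i) + ?S k * ?q = (\<Sum>i<k. F i * Smin) + (\<Sum>i=k..<m. F i * ?S k)"
    by (simp add: sum_distrib_left sum_distrib_right mult.commute)
  also have "\<dots> \<le> (\<Sum>i<k. F i * ?S i) + (\<Sum>i=k..<m. F i * ?S i)"
    using assms(3) prob_simplex_nonneg [OF assms(4)] Smin_le_Sgrid [OF assms(1,2)] Sgrid_le_iff [OF assms(1,2)]
    by (intro add_mono sum_mono mult_left_mono) auto
  also have "\<dots> = mean m Smin Smax F"
    unfolding mean_def by (rule split [symmetric])
  finally show ?thesis .
qed

lemma continuous_on_mean: "continuous_on UNIV (mean m Smin Smax)"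
  unfolding mean_def by (intro continuous_intros continuous_on_product_coordinates)

lemma mean_ge_on_Fset_OmegaTl_replicate:
  assumes "m \<ge> 2" "n \<ge> 1" "Smin < Smax" "0 \<le> \<alpha>" "k < m"
    and "F \<in> Fset m n Smin Smax (OmegaTl m n Smin Smax (replicate n (Sgrid m Smin Smax k))) \<alpha>"
  shows "Smin * (1 - root n \<alpha>) + Sgrid m Smin Smax k * root n \<alpha> \<le> mean m Smin Smax F"
proof -
  let ?c = "Smin * (1 - root n \<alpha>) + Sgrid m Smin Smax k * root n \<alpha>"
  have "?c \<le> mean m Smin Smax F"
    if "F \<in> prob_simplex m" "\<alpha> < (\<Sum>i=k..<m. F i) ^ n" for F
  proof (rule mean_ge_tail_mass [OF assms(1,3,5) that(1)])
    have "root n \<alpha> ^ n = \<alpha>"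
      using assms(2,4) by (intro real_root_pow_pos2) auto
    moreover have "0 \<le> (\<Sum>i=k..<m. F i)"
      using that(1) by (intro sum_nonneg) (simp add: prob_simplex_nonneg)
    ultimately show "root n \<alpha> \<le> (\<Sum>i=k..<m. F i)"
      using that(2) by (metis less_imp_le power_less_imp_less_base)
  qed
  moreover have "closed {F. ?c \<le> mean m Smin Smax F}"
    using continuous_on_mean by (intro closed_Collect_le continuous_on_const) auto
  ultimately have "Fset m n Smin Smax (OmegaTl m n Smin Smax (replicate n (Sgrid m Smin Smax k))) \<alpha>
      \<subseteq> {F. ?c \<le> mean m Smin Smax F}"
    unfolding Fset_def Gset_OmegaTl_replicate [OF assms(1,3,5)]
    by (intro closure_minimal) auto
  then show ?thesis
    using assms(6) by blast
qed

definition two_point :: "nat \<Rightarrow> real \<Rightarrow> nat \<Rightarrow> real" where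
  "two_point k s i = (if i = 0 then 1 - s else 0) + (if i = k then s else 0)"

lemma two_point_in_prob_simplex:
  assumes "k < m" "0 \<le> s" "s \<le> 1"
  shows "two_point k s \<in> prob_simplex m"
proof -
  have "(\<Sum>i<m. two_point k s i) = 1"
    using assms by (simp add: two_point_def sum.distrib)
  then show ?thesis
    using assms unfolding prob_simplex_def two_point_def by auto
qed

lemma two_point_tail_mass:
  assumes "k < m" "s \<le> 1"
  shows "s \<le> (\<Sum>i=k..<m. two_point k s i)"
  using assms by (simp add: two_point_def sum.distrib)

lemma mean_two_point:
  assumes "k < m"
  shows "mean m Smin Smax (two_point k s) = Smin * (1 - s) + Sgrid m Smin Smax k * s"
proof -
  have "mean m Smin Smax (two_point k s)
      = (\<Sum>i<m. if i = 0 then (1 - s) * Sgrid m Smin Smax i else 0)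
        + (\<Sum>i<m. if i = k then s * Sgrid m Smin Smax i else 0)"
    unfolding mean_def two_point_def distrib_right sum.distrib
    by (intro arg_cong2 [where f = "(+)"] sum.cong) auto
  then show ?thesis
    using assms by (simp add: algebra_simps)
qed

lemma continuous_on_two_point: "continuous_on A (two_point k)"
proof (rule continuous_on_coordinatewise_then_product)
  fix i
  show "continuous_on A (\<lambda>s. two_point k s i)"
    unfolding two_point_def by (cases "i = 0"; cases "i = k") (simp_all add: continuous_intros)
qed

lemma two_point_root_in_Fset_OmegaTl_replicate:
  assumes "m \<ge> 2" "n \<ge> 1" "Smin < Smax" "0 \<le> \<alpha>" "\<alpha> < 1" "k < m"
  shows "two_point k (root n \<alpha>)
           \<in> Fset m n Smin Smax (OmegaTl m n Smin Smax (replicate n (Sgrid m Smin Smax k))) \<alpha>"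
proof -
  let ?r = "root n \<alpha>"
  let ?G = "Gset m n Smin Smax (OmegaTl m n Smin Smax (replicate n (Sgrid m Smin Smax k))) \<alpha>"
  have r: "0 \<le> ?r" "?r < 1" "?r ^ n = \<alpha>"
    using assms(2,4,5) by auto
  have "two_point k s \<in> ?G" if "s \<in> {?r<..1}" for s
  proof -
    have "\<alpha> = ?r ^ n"
      by (rule r(3) [symmetric])
    also have "\<dots> < s ^ n"
      using that r(1) assms(2) by (intro power_strict_mono) auto
    also have "\<dots> \<le> (\<Sum>i=k..<m. two_point k s i) ^ n"
      using that r two_point_tail_mass [OF assms(6)] by (intro power_mono) auto
    finally show ?thesis
      using that r two_point_in_prob_simplex [OF assms(6)]
      unfolding Gset_OmegaTl_replicate [OF assms(1,3,6)] by auto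
  qed
  then have "two_point k ` closure {?r<..1} \<subseteq> closure ?G"
    by (intro image_closure_subset continuous_on_two_point) (auto intro: closure_subset [THEN subsetD])
  then show ?thesis
    using r unfolding Fset_def by auto
qed

theorem lemma7:
  fixes m n k :: nat and Smin Smax \<alpha> :: real
  assumes "m \<ge> 2" and "n \<ge> 1" and "Smin < Smax"
    and "0 \<le> \<alpha>" and "\<alpha> < 1" and "k < m"
  shows "Smin * (1 - root n \<alpha>) + Sgrid m Smin Smax k * root n \<alpha>
           \<in> Bvals m n Smin Smax \<alpha> (replicate n (Sgrid m Smin Smax k)) \<and>
         (\<forall>v \<in> Bvals m n Smin Smax \<alpha> (replicate n (Sgrid m Smin Smax k)).
           Smin * (1 - root n \<alpha>) + Sgrid m Smin Smax k * root n \<alpha> \<le> v)"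
proof
  show "Smin * (1 - root n \<alpha>) + Sgrid m Smin Smax k * root n \<alpha>
          \<in> Bvals m n Smin Smax \<alpha> (replicate n (Sgrid m Smin Smax k))"
    unfolding Bvals_def
    using two_point_root_in_Fset_OmegaTl_replicate [OF assms] mean_two_point [OF assms(6)]
    by (metis image_eqI)
  show "\<forall>v \<in> Bvals m n Smin Smax \<alpha> (replicate n (Sgrid m Smin Smax k)).
          Smin * (1 - root n \<alpha>) + Sgrid m Smin Smax k * root n \<alpha> \<le> v"
    unfolding Bvals_def
    using mean_ge_on_Fset_OmegaTl_replicate [OF assms(1-4,6)] by blast
qed

end
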